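(* Let $\Gamma$ be the graph with vertex set $\{v_{n,k}: n\in\mathbb Z,\ k\in\mathbb Z/10\mathbb Z\}$ and edge set $\{v_{n,k}v_{n,k+1}\}\cup\{v_{n,2k+1}v_{n+1,4k+2}\}$ ($n\in\mathbb Z$, $k\in\mathbb Z/10\mathbb Z$). Then every automorphism $\phi$ of $\Gamma$ is uniquely determined by the pair $(\phi(v_{0,1}),\phi(v_{0,2}))$.
   Context: Indices $k$ are taken modulo 10. *)

theory Defs
  imports Main "HOL-Library.Numeral_Type"
begin

type_synonym vertex = "int \<times> 10"

definition gamma_edge :: "vertex \<Rightarrow> vertex \<Rightarrow> bool" where
  "gamma_edge u w \<longleftrightarrow>
     (\<exists>n k. u = (n, k) \<and> w = (n, k + 1)) \<or>
     (\<exists>n k. u = (n, 2 * k + 1) \<and> w = (n + 1, 4 * k + 2))"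

definition gamma_adj :: "vertex \<Rightarrow> vertex \<Rightarrow> bool" where
  "gamma_adj u w \<longleftrightarrow> gamma_edge u w \<or> gamma_edge w u"

definition gamma_aut :: "(vertex \<Rightarrow> vertex) \<Rightarrow> bool" where
  "gamma_aut \<phi> \<longleftrightarrow> bij \<phi> \<and> (\<forall>u w. gamma_adj u w \<longleftrightarrow> gamma_adj (\<phi> u) (\<phi> w))"

end

theory Submission
  imports Defs
begin

text \<open>Every vertex of \<open>\<Gamma>\<close> has three neighbours: its two neighbours on the 10-cycle of its
  layer and one neighbour on an adjacent layer. Let an automorphism fix two consecutive vertices
  \<open>a, b\<close> of a layer; it permutes the two remaining neighbours of \<open>b\<close>, the next vertex \<open>c\<close> on the
  cycle and the cross neighbour \<open>d\<close>. These are told apart by the walks of length five that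
  avoid \<open>a\<close> and \<open>b\<close> up to their last step: from \<open>c\<close> they reach every neighbour of \<open>a\<close>, from \<open>d\<close>
  they do not. So an automorphism fixing \<open>v\<^sub>0\<^sub>,\<^sub>1\<close> and \<open>v\<^sub>0\<^sub>,\<^sub>2\<close> fixes the
  whole layer 0, then two consecutive vertices on each adjacent layer (as forced neighbours), and
  by induction every vertex.\<close>

lemma residue_10_cases:
  "(k::10) = 0 \<or> k = 1 \<or> k = 2 \<or> k = 3 \<or> k = 4 \<or> k = 5 \<or> k = 6 \<or> k = 7 \<or> k = 8 \<or> k = 9"
proof (induct k rule: bit0_induct)
  case (of_int z)
  then have "0 \<le> z" "z \<le> 9" by simp_all
  then have "z = 0 \<or> z = 1 \<or> z = 2 \<or> z = 3 \<or> z = 4 \<or> z = 5 \<or> z = 6 \<or> z = 7 \<or> z = 8 \<or> z = 9"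
    by presburger
  then show ?case by auto
qed

text \<open>The simplifier does not reduce numerals of type \<open>10\<close> modulo 10 by itself.\<close>

lemma numerals_mod_10:
  "(-1::10) = 9" "(10::10) = 0" "(11::10) = 1" "(13::10) = 3" "(14::10) = 4" "(17::10) = 7"
  "(18::10) = 8" "(23::10) = 3" "(29::10) = 9"
  by simp_all

text \<open>For even \<open>k\<close>, \<open>3 k + 5\<close> is the odd residue \<open>l\<close> with \<open>2 l = k\<close>.\<close>

definition cross :: "vertex \<Rightarrow> vertex" where
  "cross v = (case v of (n, k) \<Rightarrow>
     if k \<in> {1, 3, 5, 7, 9} then (n + 1, 2 * k) else (n - 1, 3 * k + 5))"

definition nbr :: "vertex \<Rightarrow> vertex set" where
  "nbr v = (case v of (n, k) \<Rightarrow> {(n, k + 1), (n, k - 1), cross (n, k)})"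

lemma gamma_edge_iff:
  "gamma_edge (n, k) w \<longleftrightarrow> w = (n, k + 1) \<or> k \<in> {1, 3, 5, 7, 9} \<and> w = cross (n, k)"
proof
  assume "gamma_edge (n, k) w"
  then show "w = (n, k + 1) \<or> k \<in> {1, 3, 5, 7, 9} \<and> w = cross (n, k)"
    unfolding gamma_edge_def
  proof (elim disjE exE conjE)
    fix m j assume "(n, k) = (m, 2 * j + 1)" "w = (m + 1, 4 * j + 2)"
    then show ?thesis using residue_10_cases[of j] by (auto simp: cross_def numerals_mod_10)
  qed auto
next
  assume "w = (n, k + 1) \<or> k \<in> {1, 3, 5, 7, 9} \<and> w = cross (n, k)"
  then show "gamma_edge (n, k) w"
  proof (elim disjE conjE)
    assume "k \<in> {1, 3, 5, 7, 9}" "w = cross (n, k)"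
    then have "(n, k) = (n, 2 * (3 * k + 2) + 1) \<and> w = (n + 1, 4 * (3 * k + 2) + 2)"
      by (auto simp: cross_def numerals_mod_10)
    then show ?thesis unfolding gamma_edge_def by blast
  qed (auto simp: gamma_edge_def)
qed

lemma double_odd_residue_iff:
  "(l::10) \<in> {1, 3, 5, 7, 9} \<and> k = 2 * l \<longleftrightarrow> k \<notin> {1, 3, 5, 7, 9} \<and> l = 3 * k + 5"
proof
  assume "l \<in> {1, 3, 5, 7, 9} \<and> k = 2 * l"
  then show "k \<notin> {1, 3, 5, 7, 9} \<and> l = 3 * k + 5"
    by (elim conjE insertE; simp)
next
  assume "k \<notin> {1, 3, 5, 7, 9} \<and> l = 3 * k + 5"
  then show "l \<in> {1, 3, 5, 7, 9} \<and> k = 2 * l"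
    using residue_10_cases[of k] by (elim conjE disjE; simp)
qed

lemma gamma_adj_iff_nbr: "gamma_adj v w \<longleftrightarrow> w \<in> nbr v"
proof -
  obtain n k where v: "v = (n, k)" by force
  obtain m l where w: "w = (m, l)" by force
  have "gamma_edge (m, l) (n, k) \<longleftrightarrow>
      (m, l) = (n, k - 1) \<or> k \<notin> {1, 3, 5, 7, 9} \<and> (m, l) = cross (n, k)"
    using double_odd_residue_iff[of l k] by (auto simp: gamma_edge_iff cross_def)
  then show ?thesis
    unfolding v w gamma_adj_def gamma_edge_iff nbr_def by auto
qed

lemma nbr_simps:
  "nbr (n, 0) = {(n, 1), (n, 9), (n - 1, 5)}"
  "nbr (n, 1) = {(n, 2), (n, 0), (n + 1, 2)}"
  "nbr (n, 2) = {(n, 3), (n, 1), (n - 1, 1)}"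
  "nbr (n, 3) = {(n, 4), (n, 2), (n + 1, 6)}"
  "nbr (n, 4) = {(n, 5), (n, 3), (n - 1, 7)}"
  "nbr (n, 5) = {(n, 6), (n, 4), (n + 1, 0)}"
  "nbr (n, 6) = {(n, 7), (n, 5), (n - 1, 3)}"
  "nbr (n, 7) = {(n, 8), (n, 6), (n + 1, 4)}"
  "nbr (n, 8) = {(n, 9), (n, 7), (n - 1, 9)}"
  "nbr (n, 9) = {(n, 0), (n, 8), (n + 1, 8)}"
  by (simp_all add: nbr_def cross_def numerals_mod_10)

lemma gamma_aut_inj: "gamma_aut f \<Longrightarrow> inj f"
  unfolding gamma_aut_def by (simp add: bij_is_inj)

lemma gamma_aut_nbr_iff: "gamma_aut f \<Longrightarrow> f w \<in> nbr (f v) \<longleftrightarrow> w \<in> nbr v"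
  unfolding gamma_aut_def gamma_adj_iff_nbr by blast

lemma gamma_aut_comp: "gamma_aut f \<Longrightarrow> gamma_aut g \<Longrightarrow> gamma_aut (f \<circ> g)"
  unfolding gamma_aut_def by (metis bij_comp comp_apply)

lemma gamma_aut_inv: "gamma_aut f \<Longrightarrow> gamma_aut (inv f)"
  unfolding gamma_aut_def by (metis bij_imp_bij_inv bij_inv_eq_iff)

fun walk_ends :: "vertex set \<Rightarrow> vertex \<Rightarrow> nat \<Rightarrow> vertex set" where
  "walk_ends A s 0 = {s}"
| "walk_ends A s (Suc m) = (\<Union>x \<in> walk_ends A s m - A. nbr x)"

lemma gamma_aut_walk_ends:
  assumes f: "gamma_aut f"
  shows "f ` walk_ends A s m \<subseteq> walk_ends (f ` A) (f s) m"
proof (induction m)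
  case (Suc m)
  have "f w \<in> walk_ends (f ` A) (f s) (Suc m)"
    if "x \<in> walk_ends A s m" "x \<notin> A" "w \<in> nbr x" for x w
  proof -
    have "f x \<notin> f ` A" using that(2) gamma_aut_inj[OF f] by (simp add: inj_image_mem_iff)
    moreover have "f w \<in> nbr (f x)" using that(3) gamma_aut_nbr_iff[OF f] by blast
    ultimately show ?thesis using Suc that(1) by auto
  qed
  then show ?case by auto
qed simp

lemma gamma_aut_fixes_third_nbr:
  assumes f: "gamma_aut f" and "f v = v" "f u = u" "f u' = u'"
    and "nbr v = {u, u', w}" "w \<noteq> u" "w \<noteq> u'"
  shows "f w = w"
proof -
  have "f w \<in> nbr v" using gamma_aut_nbr_iff[OF f, of w v] assms by simp
  moreover have "f w \<noteq> u" "f w \<noteq> u'"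
    using gamma_aut_inj[OF f] assms by (auto simp: inj_eq)
  ultimately show ?thesis using assms(5) by blast
qed

lemma gamma_aut_fixes_common_nbr:
  assumes f: "gamma_aut f" and "f u = u" "f u' = u'" and "nbr u \<inter> nbr u' = {w}"
  shows "f w = w"
proof -
  have "f w \<in> nbr u \<inter> nbr u'"
    using gamma_aut_nbr_iff[OF f, of w u] gamma_aut_nbr_iff[OF f, of w u'] assms by auto
  then show ?thesis using assms(4) by blast
qed

lemma gamma_aut_fixes_by_walk_ends:
  assumes f: "gamma_aut f" and fa: "f a = a" and fb: "f b = b"
    and "nbr b \<subseteq> {a, c, d}" "c \<in> nbr b" "c \<noteq> a"
    and c_ends: "nbr a \<subseteq> walk_ends {a, b} c m"
    and d_ends: "\<not> nbr a \<subseteq> walk_ends {a, b} d m"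
  shows "f c = c"
proof (rule ccontr)
  assume "f c \<noteq> c"
  moreover have "f c \<in> nbr b" using gamma_aut_nbr_iff[OF f, of c b] fb assms by simp
  moreover have "f c \<noteq> a" using gamma_aut_inj[OF f] fa assms by (metis inj_eq)
  ultimately have fc: "f c = d" using assms(4) by blast
  have "y \<in> walk_ends {a, b} d m" if y: "y \<in> nbr a" for y
  proof -
    have "bij f" using f unfolding gamma_aut_def ..
    then have y_eq: "y = f (inv f y)" by (simp add: bij_is_surj surj_f_inv_f)
    then have "inv f y \<in> nbr a" using gamma_aut_nbr_iff[OF f, of "inv f y" a] fa y by simp
    then have "y \<in> f ` walk_ends {a, b} c m" using c_ends y_eq by blast
    then show ?thesis using gamma_aut_walk_ends[OF f, of "{a, b}" c m] fa fb fc by auto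
  qed
  then show False using d_ends by blast
qed

lemma walk_ends_from_successor:
  "nbr (n, k) \<subseteq> walk_ends {(n, k), (n, k + 1)} (n, k + 2) 5"
  using residue_10_cases[of k]
  by (elim disjE) (simp_all add: numeral_eq_Suc nbr_simps insert_Diff_if numerals_mod_10)

lemma walk_ends_from_cross:
  "\<not> nbr (n, k) \<subseteq> walk_ends {(n, k), (n, k + 1)} (cross (n, k + 1)) 5"
  using residue_10_cases[of k]
  by (elim disjE)
    (simp_all add: numeral_eq_Suc nbr_simps insert_Diff_if numerals_mod_10 cross_def)

lemma gamma_aut_fixes_next_on_layer:
  assumes f: "gamma_aut f" and "f (n, k) = (n, k)" "f (n, k + 1) = (n, k + 1)"
  shows "f (n, k + 2) = (n, k + 2)"
proof (rule gamma_aut_fixes_by_walk_ends[OF f assms(2,3), where m = 5])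
  have "nbr (n, k + 1) = {(n, k + 2), (n, k), cross (n, k + 1)}"
    by (simp add: nbr_def algebra_simps)
  then show "nbr (n, k + 1) \<subseteq> {(n, k), (n, k + 2), cross (n, k + 1)}"
    and "(n, k + 2) \<in> nbr (n, k + 1)" by auto
qed (simp_all add: walk_ends_from_successor walk_ends_from_cross)

lemma gamma_aut_fixes_layer:
  assumes f: "gamma_aut f" and "f (n, 1) = (n, 1)" "f (n, 2) = (n, 2)"
  shows "f (n, k) = (n, k)"
proof -
  have fixes_from_1:
    "f (n, 1 + of_nat i) = (n, 1 + of_nat i) \<and> f (n, 2 + of_nat i) = (n, 2 + of_nat i)" for i :: nat
  proof (induction i)
    case (Suc i)
    then show ?case
      using gamma_aut_fixes_next_on_layer[OF f, of n "1 + of_nat i"] by (simp add: algebra_simps)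
  qed (use assms in simp)
  obtain z where "k - 1 = of_int z" "0 \<le> z" by (cases "k - 1" rule: bit0_cases) simp
  then have "k = 1 + of_nat (nat z)" by (simp add: algebra_simps)
  then show ?thesis using fixes_from_1 by blast
qed

lemma gamma_aut_fixes_adjacent_layers:
  assumes f: "gamma_aut f" and layer: "\<And>k. f (n, k) = (n, k)"
  shows "f (n + 1, 1) = (n + 1, 1)" "f (n + 1, 2) = (n + 1, 2)"
    and "f (n - 1, 1) = (n - 1, 1)" "f (n - 1, 2) = (n - 1, 2)"
proof -
  have up_2: "f (n + 1, 2) = (n + 1, 2)"
    by (rule gamma_aut_fixes_third_nbr[OF f layer[of 1] layer[of 2] layer[of 0]])
      (simp_all add: nbr_simps)
  have up_0: "f (n + 1, 0) = (n + 1, 0)"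
    by (rule gamma_aut_fixes_third_nbr[OF f layer[of 5] layer[of 6] layer[of 4]])
      (simp_all add: nbr_simps)
  have down_1: "f (n - 1, 1) = (n - 1, 1)"
    by (rule gamma_aut_fixes_third_nbr[OF f layer[of 2] layer[of 3] layer[of 1]])
      (simp_all add: nbr_simps)
  have down_3: "f (n - 1, 3) = (n - 1, 3)"
    by (rule gamma_aut_fixes_third_nbr[OF f layer[of 6] layer[of 7] layer[of 5]])
      (simp_all add: nbr_simps)
  show "f (n + 1, 1) = (n + 1, 1)"
    by (rule gamma_aut_fixes_common_nbr[OF f up_0 up_2]) (auto simp: nbr_simps)
  show "f (n - 1, 2) = (n - 1, 2)"
    by (rule gamma_aut_fixes_common_nbr[OF f down_1 down_3]) (auto simp: nbr_simps)
  show "f (n + 1, 2) = (n + 1, 2)" by (fact up_2)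
  show "f (n - 1, 1) = (n - 1, 1)" by (fact down_1)
qed

lemma gamma_aut_fixing_two_vertices_is_id:
  assumes f: "gamma_aut f" and "f (0, 1) = (0, 1)" "f (0, 2) = (0, 2)"
  shows "f v = v"
proof -
  obtain n k where v: "v = (n, k)" by force
  have "f (n, 1) = (n, 1) \<and> f (n, 2) = (n, 2)"
  proof (induction n rule: int_induct[where k = 0])
    case base
    then show ?case using assms by simp
  next
    case (step1 i)
    then show ?case
      using gamma_aut_fixes_adjacent_layers[OF f gamma_aut_fixes_layer[OF f]] by blast
  next
    case (step2 i)
    then show ?case
      using gamma_aut_fixes_adjacent_layers[OF f gamma_aut_fixes_layer[OF f]] by blast
  qed
  then show ?thesis unfolding v using gamma_aut_fixes_layer[OF f] by blast
qed

theorem mainTheorem5: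
  assumes "gamma_aut \<phi>" and "gamma_aut \<psi>"
    and "\<phi> (0, 1) = \<psi> (0, 1)" and "\<phi> (0, 2) = \<psi> (0, 2)"
  shows "\<phi> = \<psi>"
proof
  fix v
  have "bij \<psi>" using assms(2) unfolding gamma_aut_def ..
  then have inv_\<psi>: "inv \<psi> (\<psi> x) = x" "\<psi> (inv \<psi> x) = x" for x
    by (simp_all add: bij_is_inj bij_is_surj surj_f_inv_f)
  have "gamma_aut (inv \<psi> \<circ> \<phi>)" by (intro gamma_aut_comp gamma_aut_inv assms)
  moreover have "(inv \<psi> \<circ> \<phi>) (0, 1) = (0, 1)" "(inv \<psi> \<circ> \<phi>) (0, 2) = (0, 2)"
    using assms(3,4) inv_\<psi> by simp_all
  ultimately have "(inv \<psi> \<circ> \<phi>) v = v" by (rule gamma_aut_fixing_two_vertices_is_id)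
  then show "\<phi> v = \<psi> v" using inv_\<psi>(2) by (metis comp_apply)
qed

end
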